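(* Let $f:\mathbb{R}^n\to\mathbb{R}$ be a continuously differentiable convex function. Let $H$ be a diagonal matrix with nonnegative diagonal entries such that $f(y)\le f(x)+\nabla f(x)^T(y-x)+\tfrac12\|y-x\|_H^2$ for all $x,y$, and let $D$ be diagonal with $D\succ H$. Let $(x_k)$ be a sequence generated by the IWHT algorithm with $D$, and assume $(x_k)$ is bounded. Then $f(x_k)$ converges to a limit $f^*$ and there exist $K\in\mathbb{N}$ and $c>0$ such that $f(x_k)-f^*\le c/k$ for all $k\ge K$. If moreover $f$ is $s$-restricted strongly convex, then $f(x_k)$ converges to $f^*$ linearly, i.e. there exist $c>0$ and $\rho\in(0,1)$ with $f(x_k)-f^*\le c\rho^k$ for all sufficiently large $k$.
   Context: $\|z\|_A^2=z^TAz$. $C_s=\{x\in\mathbb{R}^n:\|x\|_0\le s\}$ for a positive integer $s$, where $\|x\|_0$ is the number of nonzero entries. $\mathcal{P}_{C_s}(z)=\operatorname{argmin}_{y\in C_s}\|y-z\|_2^2$ (set-valued). IWHT with diagonal $D\succ0$: start from $x_0\in C_s$; pick $y_{k+1}\in\mathcal{P}_{C_s}\big(D^{1/2}x_k-D^{-1/2}\nabla f(x_k)\big)$ and set $x_{k+1}=D^{-1/2}y_{k+1}$. $f$ is $s$-restricted strongly convex if there is $\sigma_s>0$ with $f(y)\ge f(x)+\nabla f(x)^T(y-x)+\frac{\sigma_s}{2}\|x-y\|_2^2$ for all $x,y$ with $\|x-y\|_0\le s$. *)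

theory Defs
  imports "HOL-Analysis.Analysis"
begin

definition l0norm :: "real^'n \<Rightarrow> nat" where
  "l0norm x = card {i. x $ i \<noteq> 0}"

definition sparse_set :: "nat \<Rightarrow> (real^'n) set" where
  "sparse_set s = {x. l0norm x \<le> s}"

definition proj_sparse :: "nat \<Rightarrow> real^'n \<Rightarrow> (real^'n) set" where
  "proj_sparse s z = {y \<in> sparse_set s. \<forall>y' \<in> sparse_set s. norm (y - z)^2 \<le> norm (y' - z)^2}"

definition is_diag :: "real^'n^'n \<Rightarrow> bool" where
  "is_diag A \<longleftrightarrow> (\<forall>i j. i \<noteq> j \<longrightarrow> A $ i $ j = 0)"

definition quad_norm_sq :: "real^'n^'n \<Rightarrow> real^'n \<Rightarrow> real" where
  "quad_norm_sq A z = z \<bullet> (A *v z)"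

definition pos_def :: "real^'n^'n \<Rightarrow> bool" where
  "pos_def A \<longleftrightarrow> (\<forall>z. z \<noteq> 0 \<longrightarrow> z \<bullet> (A *v z) > 0)"

definition diag_sqrt :: "real^'n^'n \<Rightarrow> real^'n^'n" where
  "diag_sqrt D = (\<chi> i j. if i = j then sqrt (D $ i $ i) else 0)"

definition diag_inv_sqrt :: "real^'n^'n \<Rightarrow> real^'n^'n" where
  "diag_inv_sqrt D = (\<chi> i j. if i = j then 1 / sqrt (D $ i $ i) else 0)"

definition iwht_seq :: "nat \<Rightarrow> real^'n^'n \<Rightarrow> (real^'n \<Rightarrow> real^'n) \<Rightarrow> (nat \<Rightarrow> real^'n) \<Rightarrow> bool" where
  "iwht_seq s D grad x \<longleftrightarrow> x 0 \<in> sparse_set s \<and>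
     (\<forall>k. \<exists>y \<in> proj_sparse s (diag_sqrt D *v x k - diag_inv_sqrt D *v grad (x k)).
            x (Suc k) = diag_inv_sqrt D *v y)"

definition restricted_strongly_convex :: "nat \<Rightarrow> (real^'n \<Rightarrow> real) \<Rightarrow> (real^'n \<Rightarrow> real^'n) \<Rightarrow> bool" where
  "restricted_strongly_convex s f grad \<longleftrightarrow> (\<exists>\<sigma>>0. \<forall>x y. l0norm (x - y) \<le> s \<longrightarrow>
      f y \<ge> f x + grad x \<bullet> (y - x) + \<sigma> / 2 * norm (x - y)^2)"

end

theory Submission
  imports Defs
begin

text \<open>
  With \<open>g = \<nabla>f(x\<^sub>k)\<close>, the IWHT step \<open>x\<^sub>k\<^sub>+\<^sub>1\<close> minimizes over \<open>C\<^sub>s\<close> the quadratic model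
  \<open>g\<^sup>T(w - x\<^sub>k) + 1/2 \<parallel>w - x\<^sub>k\<parallel>\<^sub>D\<^sup>2\<close>: in the coordinates \<open>D\<^sup>1\<^sup>/\<^sup>2 w\<close> the squared distance to the
  point being projected is twice this model plus a constant. As \<open>D \<succ> H\<close>, the model majorizes \<open>f\<close>, so
  \<open>f(x\<^sub>k\<^sub>+\<^sub>1) \<le> f(x\<^sub>k) + model(w)\<close> for every \<open>s\<close>-sparse \<open>w\<close>, and \<open>f(x\<^sub>k)\<close> decreases to a
  limit \<open>f\<^sup>*\<close>. There are only finitely many supports and \<open>(x\<^sub>k)\<close> is bounded, so eventually the
  support of \<open>x\<^sub>k\<close> contains the support of a limit point \<open>u\<^sub>k\<close> with \<open>f(u\<^sub>k) = f\<^sup>*\<close>; then the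
  whole line through \<open>x\<^sub>k\<close> and \<open>u\<^sub>k\<close> lies in \<open>C\<^sub>s\<close>. Taking \<open>w = x\<^sub>k + t(u\<^sub>k - x\<^sub>k)\<close> and using
  convexity gives \<open>a\<^sub>k\<^sub>+\<^sub>1 \<le> a\<^sub>k - a\<^sub>k\<^sup>2/(2R)\<close> for the gap \<open>a\<^sub>k = f(x\<^sub>k) - f\<^sup>*\<close>, hence
  \<open>a\<^sub>k = O(1/k)\<close>; restricted strong convexity improves this to \<open>a\<^sub>k\<^sub>+\<^sub>1 \<le> (1 - t) a\<^sub>k\<close>.
\<close>

subsection \<open>Supports and diagonal scalings\<close>

definition vec_support :: "real^'n \<Rightarrow> 'n set" where
  "vec_support v = {i. v $ i \<noteq> 0}"

definition quad_model :: "real^'n^'n \<Rightarrow> real^'n \<Rightarrow> real^'n \<Rightarrow> real^'n \<Rightarrow> real" where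
  "quad_model D g x w = g \<bullet> (w - x) + 1/2 * quad_norm_sq D (w - x)"

lemma sparse_set_subset_support:
  assumes "vec_support v \<subseteq> vec_support w" and "w \<in> sparse_set s"
  shows "v \<in> sparse_set s"
proof -
  have "l0norm v \<le> l0norm w"
    unfolding l0norm_def using assms(1) by (intro card_mono) (auto simp: vec_support_def)
  with assms(2) show ?thesis by (simp add: sparse_set_def)
qed

lemma diag_matrix_vector_mult_nth:
  assumes "is_diag A"
  shows "(A *v v) $ i = A $ i $ i * v $ i"
proof -
  have "(A *v v) $ i = (\<Sum>j\<in>UNIV. A $ i $ j * v $ j)"
    by (simp add: matrix_vector_mult_def)
  also have "\<dots> = (\<Sum>j\<in>{i}. A $ i $ j * v $ j)"
    by (rule sum.mono_neutral_right) (use assms in \<open>auto simp: is_diag_def\<close>)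
  finally show ?thesis by simp
qed

lemma is_diag_diag_sqrt: "is_diag (diag_sqrt D)"
  by (simp add: is_diag_def diag_sqrt_def)

lemma is_diag_diag_inv_sqrt: "is_diag (diag_inv_sqrt D)"
  by (simp add: is_diag_def diag_inv_sqrt_def)

lemma diag_sqrt_mult_nth: "(diag_sqrt D *v v) $ i = sqrt (D $ i $ i) * v $ i"
  by (subst diag_matrix_vector_mult_nth[OF is_diag_diag_sqrt]) (simp add: diag_sqrt_def)

lemma diag_inv_sqrt_mult_nth: "(diag_inv_sqrt D *v v) $ i = v $ i / sqrt (D $ i $ i)"
  by (subst diag_matrix_vector_mult_nth[OF is_diag_diag_inv_sqrt]) (simp add: diag_inv_sqrt_def)

lemma vec_support_diag_mult:
  assumes "is_diag A" and "\<And>i. A $ i $ i \<noteq> 0"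
  shows "vec_support (A *v v) = vec_support v"
  using assms by (simp add: vec_support_def diag_matrix_vector_mult_nth)

lemma diag_mult_in_sparse_set_iff:
  assumes "is_diag A" and "\<And>i. A $ i $ i \<noteq> 0"
  shows "A *v v \<in> sparse_set s \<longleftrightarrow> v \<in> sparse_set s"
  using sparse_set_subset_support vec_support_diag_mult[OF assms] by blast

lemma diag_sqrt_mult_diag_inv_sqrt_mult:
  assumes "\<And>i. 0 < D $ i $ i"
  shows "diag_sqrt D *v (diag_inv_sqrt D *v v) = v"
proof -
  have "D $ i $ i \<noteq> 0" for i
    using assms[of i] by simp
  then show ?thesis
    by (simp add: vec_eq_iff diag_sqrt_mult_nth diag_inv_sqrt_mult_nth)
qed

lemma pos_def_diag_pos:
  assumes "pos_def A"
  shows "0 < A $ i $ i"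
proof -
  have "0 < axis i 1 \<bullet> (A *v axis i (1::real))"
    using assms unfolding pos_def_def by (metis axis_eq_0_iff zero_neq_one)
  moreover have "(A *v axis i (1::real)) $ i = A $ i $ i"
    by (simp add: matrix_vector_mult_def axis_def if_distrib cong: if_cong)
  ultimately show ?thesis
    by (simp add: inner_axis')
qed

lemma quad_norm_sq_diag:
  assumes "is_diag A"
  shows "quad_norm_sq A v = (\<Sum>i\<in>UNIV. A $ i $ i * (v $ i)\<^sup>2)"
  by (simp add: quad_norm_sq_def inner_vec_def diag_matrix_vector_mult_nth[OF assms]
      power2_eq_square algebra_simps)

lemma quad_norm_sq_scaleR: "quad_norm_sq A (t *\<^sub>R v) = t\<^sup>2 * quad_norm_sq A v"
  unfolding quad_norm_sq_def by (simp add: matrix_vector_mult_scaleR power2_eq_square)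

lemma quad_norm_sq_mono:
  assumes "pos_def (D - H)"
  shows "quad_norm_sq H v \<le> quad_norm_sq D v"
proof -
  have "0 \<le> v \<bullet> ((D - H) *v v)"
    using assms unfolding pos_def_def by (cases "v = 0") (auto intro: less_imp_le)
  then show ?thesis
    unfolding quad_norm_sq_def by (simp add: matrix_vector_mult_diff_rdistrib inner_diff_right)
qed

lemma quad_norm_sq_le_norm:
  obtains M where "0 < M" and "\<And>v. quad_norm_sq A v \<le> M * (norm v)\<^sup>2"
proof -
  have "bounded_linear (\<lambda>v. A *v v)"
    by (simp add: linear_conv_bounded_linear)
  then obtain M where M: "0 < M" "\<And>v. norm (A *v v) \<le> norm v * M"
    using bounded_linear.pos_bounded by blast
  have "quad_norm_sq A v \<le> M * (norm v)\<^sup>2" for v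
  proof -
    have "quad_norm_sq A v \<le> norm v * norm (A *v v)"
      unfolding quad_norm_sq_def by (rule order_trans[OF abs_ge_self Cauchy_Schwarz_ineq2])
    also have "\<dots> \<le> norm v * (norm v * M)"
      using M by (simp add: mult_left_mono)
    finally show ?thesis
      by (simp add: power2_eq_square algebra_simps)
  qed
  with M that show ?thesis by blast
qed

subsection \<open>The IWHT step minimizes a quadratic model\<close>

lemma diag_sqrt_dist_eq_quad_model:
  assumes pos: "\<And>i. 0 < D $ i $ i" and "is_diag D"
  shows "(norm (diag_sqrt D *v w - (diag_sqrt D *v x - diag_inv_sqrt D *v g)))\<^sup>2
     = 2 * quad_model D g x w + (\<Sum>i\<in>UNIV. (g $ i)\<^sup>2 / D $ i $ i)"
proof -
  have coord: "(sqrt d * a - (sqrt d * b - c / sqrt d))\<^sup>2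
                = d * (a - b)\<^sup>2 + 2 * (c * (a - b)) + c\<^sup>2 / d"
    if "0 < d" for d a b c :: real
  proof -
    have "(sqrt d)\<^sup>2 = d" "0 < sqrt d" using that by simp_all
    then show ?thesis by (simp add: field_simps power2_eq_square)
  qed
  have "(norm (diag_sqrt D *v w - (diag_sqrt D *v x - diag_inv_sqrt D *v g)))\<^sup>2
     = (\<Sum>i\<in>UNIV. (sqrt (D $ i $ i) * w $ i
                       - (sqrt (D $ i $ i) * x $ i - g $ i / sqrt (D $ i $ i)))\<^sup>2)"
    unfolding power2_norm_eq_inner inner_vec_def
    by (simp add: power2_eq_square diag_sqrt_mult_nth diag_inv_sqrt_mult_nth)
  also have "\<dots> = (\<Sum>i\<in>UNIV. D $ i $ i * (w $ i - x $ i)\<^sup>2 + 2 * (g $ i * (w $ i - x $ i))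
                     + (g $ i)\<^sup>2 / D $ i $ i)"
    by (rule sum.cong) (simp_all add: coord pos)
  also have "\<dots> = 2 * quad_model D g x w + (\<Sum>i\<in>UNIV. (g $ i)\<^sup>2 / D $ i $ i)"
    unfolding quad_model_def quad_norm_sq_diag[OF \<open>is_diag D\<close>] inner_vec_def sum.distrib
      sum_distrib_left[symmetric]
    by (simp add: algebra_simps)
  finally show ?thesis .
qed

lemma iwht_step_in_sparse_set:
  assumes "\<And>i. 0 < D $ i $ i"
    and "y \<in> proj_sparse s (diag_sqrt D *v x - diag_inv_sqrt D *v g)"
  shows "diag_inv_sqrt D *v y \<in> sparse_set s"
proof (subst diag_mult_in_sparse_set_iff[OF is_diag_diag_inv_sqrt])
  show "diag_inv_sqrt D $ i $ i \<noteq> 0" for i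
    using assms(1)[of i] by (simp add: diag_inv_sqrt_def)
  show "y \<in> sparse_set s"
    using assms(2) by (simp add: proj_sparse_def)
qed

lemma iwht_step_minimizes_quad_model:
  assumes pos: "\<And>i. 0 < D $ i $ i" and "is_diag D"
    and y: "y \<in> proj_sparse s (diag_sqrt D *v x - diag_inv_sqrt D *v g)"
    and w: "w \<in> sparse_set s"
  shows "quad_model D g x (diag_inv_sqrt D *v y) \<le> quad_model D g x w"
proof -
  have "diag_sqrt D *v w \<in> sparse_set s"
    using w pos[THEN less_imp_neq]
    by (subst diag_mult_in_sparse_set_iff[OF is_diag_diag_sqrt]) (auto simp: diag_sqrt_def)
  with y have "(norm (diag_sqrt D *v (diag_inv_sqrt D *v y)
                      - (diag_sqrt D *v x - diag_inv_sqrt D *v g)))\<^sup>2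
               \<le> (norm (diag_sqrt D *v w - (diag_sqrt D *v x - diag_inv_sqrt D *v g)))\<^sup>2"
    by (simp add: proj_sparse_def diag_sqrt_mult_diag_inv_sqrt_mult[OF pos])
  then show ?thesis
    unfolding diag_sqrt_dist_eq_quad_model[OF pos \<open>is_diag D\<close>] by simp
qed

subsection \<open>Scalar recursions\<close>

lemma quadratic_descent_sublinear:
  fixes a b g Q R :: real
  assumes b: "\<And>t. b \<le> a + t * g + t\<^sup>2 / 2 * Q"
    and g: "g \<le> - a" and Q: "Q \<le> R" and "0 \<le> a" "0 < R"
  shows "b \<le> a - a\<^sup>2 / (2 * R)"
proof -
  define t where "t = a / R"
  have "0 \<le> t"
    using assms by (simp add: t_def)
  have "b \<le> a + t * g + t\<^sup>2 / 2 * Q"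
    by (rule b)
  also have "\<dots> \<le> a + t * (- a) + t\<^sup>2 / 2 * R"
    using mult_left_mono[OF g \<open>0 \<le> t\<close>] mult_left_mono[OF Q, of "t\<^sup>2 / 2"] by simp
  also have "\<dots> = a - a\<^sup>2 / (2 * R)"
    using \<open>0 < R\<close> by (simp add: t_def field_simps power2_eq_square)
  finally show ?thesis .
qed

lemma quadratic_descent_linear:
  fixes a b g Q M n \<sigma> t :: real
  assumes b: "b \<le> a + t * g + t\<^sup>2 / 2 * Q"
    and g: "g \<le> - a - \<sigma> / 2 * n" and Q: "Q \<le> M * n"
    and "0 \<le> n" "0 \<le> t" "t * M \<le> \<sigma>"
  shows "b \<le> (1 - t) * a"
proof -
  have "b \<le> a + t * (- a - \<sigma> / 2 * n) + t\<^sup>2 / 2 * (M * n)"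
    using b mult_left_mono[OF g \<open>0 \<le> t\<close>] mult_left_mono[OF Q, of "t\<^sup>2 / 2"] by simp
  also have "\<dots> = (1 - t) * a + t * n / 2 * (t * M - \<sigma>)"
    by (simp add: field_simps power2_eq_square)
  also have "\<dots> \<le> (1 - t) * a"
    using assms(4-6) by (simp add: mult_nonneg_nonpos)
  finally show ?thesis .
qed

lemma recursion_inverse_bound:
  fixes a :: "nat \<Rightarrow> real"
  assumes rec: "\<And>k. a (Suc k) \<le> a k - (a k)\<^sup>2 / (2 * R)"
    and le: "\<And>k. a k \<le> R" and "0 < R"
  shows "a j \<le> 2 * R / (real j + 1)"
proof (induction j)
  case 0
  then show ?case using le[of 0] \<open>0 < R\<close> by simp
next
  case (Suc j)
  show ?case
  proof (cases "a j \<le> 2 * R / (real j + 2)")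
    case True
    have "0 \<le> (a j)\<^sup>2 / (2 * R)"
      using \<open>0 < R\<close> by simp
    with rec[of j] True show ?thesis
      by (simp add: add.commute)
  next
    case False
    have "a (Suc j) \<le> a j * (1 - a j / (2 * R))"
      using rec[of j] \<open>0 < R\<close> by (simp add: field_simps power2_eq_square)
    also have "\<dots> \<le> 2 * R / (real j + 1) * (1 - 1 / (real j + 2))"
    proof (rule mult_mono)
      show "1 - a j / (2 * R) \<le> 1 - 1 / (real j + 2)"
        using False \<open>0 < R\<close> by (simp add: field_simps)
      show "0 \<le> 1 - a j / (2 * R)"
        using le[of j] \<open>0 < R\<close> by (simp add: field_simps)
    qed (use Suc.IH \<open>0 < R\<close> in simp_all)
    also have "\<dots> = 2 * R / (real (Suc j) + 1)"
    proof -
      have "1 - 1 / (real j + 2) = (real j + 1) / (real j + 2)"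
        by (simp add: field_simps)
      then show ?thesis by simp
    qed
    finally show ?thesis .
  qed
qed

lemma sublinear_rate_of_recursion:
  fixes a :: "nat \<Rightarrow> real"
  assumes "\<forall>\<^sub>F k in sequentially. a (Suc k) \<le> a k - (a k)\<^sup>2 / (2 * R)"
    and le: "\<And>k. a k \<le> R" and "0 < R"
  shows "\<exists>K c. 0 < c \<and> (\<forall>k\<ge>K. a k \<le> c / real k)"
proof -
  obtain K where rec: "\<And>k. K \<le> k \<Longrightarrow> a (Suc k) \<le> a k - (a k)\<^sup>2 / (2 * R)"
    using assms(1) by (auto simp: eventually_sequentially)
  have bound: "a (K + j) \<le> 2 * R / (real j + 1)" for j
    by (rule recursion_inverse_bound[of "\<lambda>j. a (K + j)"]) (use rec le \<open>0 < R\<close> in auto)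
  have "a k \<le> 2 * R * (real K + 1) / real k" if "Suc K \<le> k" for k
  proof -
    define j where "j = k - K"
    have k: "k = K + j" "0 < real k"
      using that by (simp_all add: j_def)
    have "a k \<le> 2 * R / (real j + 1)"
      using bound[of j] k by simp
    also have "\<dots> = 2 * R * (real K + 1) / ((real K + 1) * (real j + 1))"
      by simp
    also have "\<dots> \<le> 2 * R * (real K + 1) / real k"
    proof (rule divide_left_mono)
      show "real k \<le> (real K + 1) * (real j + 1)"
        using k by (simp add: algebra_simps)
      show "0 < (real K + 1) * (real j + 1) * real k"
        using k by simp
    qed (use \<open>0 < R\<close> in simp)
    finally show ?thesis .
  qed
  moreover have "0 < 2 * R * (real K + 1)"
    using \<open>0 < R\<close> by simp
  ultimately show ?thesis by blast
qed

lemma geometric_rate_of_recursion: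
  fixes a :: "nat \<Rightarrow> real"
  assumes "\<forall>\<^sub>F k in sequentially. a (Suc k) \<le> \<rho> * a k" and "0 < \<rho>"
  shows "\<exists>c. 0 < c \<and> (\<forall>\<^sub>F k in sequentially. a k \<le> c * \<rho> ^ k)"
proof -
  obtain K where rec: "\<And>k. K \<le> k \<Longrightarrow> a (Suc k) \<le> \<rho> * a k"
    using assms(1) by (auto simp: eventually_sequentially)
  have bound: "a (K + j) \<le> \<rho> ^ j * a K" for j
  proof (induction j)
    case (Suc j)
    have "a (K + Suc j) \<le> \<rho> * a (K + j)"
      using rec[of "K + j"] by simp
    also have "\<dots> \<le> \<rho> * (\<rho> ^ j * a K)"
      using Suc.IH \<open>0 < \<rho>\<close> by simp
    finally show ?case by simp
  qed simp
  define c where "c = max 1 (a K / \<rho> ^ K)"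
  have "a (K + j) \<le> c * \<rho> ^ (K + j)" for j
  proof -
    have "a (K + j) \<le> a K / \<rho> ^ K * \<rho> ^ (K + j)"
      using bound[of j] \<open>0 < \<rho>\<close> by (simp add: power_add ac_simps)
    also have "\<dots> \<le> c * \<rho> ^ (K + j)"
      using \<open>0 < \<rho>\<close> by (intro mult_right_mono) (simp_all add: c_def)
    finally show ?thesis .
  qed
  then have "\<forall>\<^sub>F k in sequentially. a k \<le> c * \<rho> ^ k"
    unfolding eventually_sequentially by (metis le_iff_add)
  moreover have "0 < c"
    by (simp add: c_def)
  ultimately show ?thesis by blast
qed

subsection \<open>Supports of limit points\<close>

lemma eventually_frequent_value:
  assumes "finite (range g)"
  shows "\<forall>\<^sub>F k in sequentially. infinite {j. g j = g k}"
proof -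
  define rare where "rare = (\<Union>v\<in>{v \<in> range g. finite {j. g j = v}}. {j. g j = v})"
  have "finite rare"
    using assms unfolding rare_def by (intro finite_UN_I) auto
  have "infinite {j. g j = g k}" if "Max rare < k" for k
  proof
    assume "finite {j. g j = g k}"
    then have "k \<in> rare"
      unfolding rare_def by blast
    with \<open>finite rare\<close> that show False
      using Max_ge leD by blast
  qed
  then show ?thesis
    unfolding eventually_sequentially by (meson Suc_le_lessD)
qed

lemma frequent_support_limit_point:
  fixes x :: "nat \<Rightarrow> real^'n" and f :: "real^'n \<Rightarrow> 'a::t2_space"
  assumes bdd: "bounded (range x)" and f: "continuous_on UNIV f"
    and lim: "(\<lambda>k. f (x k)) \<longlonglongrightarrow> L" and freq: "infinite {k. vec_support (x k) = S}"
  shows "\<exists>u\<in>closure (range x). vec_support u \<subseteq> S \<and> f u = L"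
proof -
  obtain r :: "nat \<Rightarrow> nat" where r: "strict_mono r" "\<And>n. vec_support (x (r n)) = S"
    using infinite_enumerate[OF freq] by auto
  have "bounded (range (x \<circ> r))"
    using bdd by (rule bounded_subset) auto
  then obtain l and r' :: "nat \<Rightarrow> nat" where r': "strict_mono r'" "(x \<circ> r \<circ> r') \<longlonglongrightarrow> l"
    using bounded_imp_convergent_subsequence by blast
  have "l \<in> closure (range x)"
    unfolding closure_sequential using r'(2) by (intro exI[of _ "x \<circ> r \<circ> r'"]) auto
  moreover have "vec_support l \<subseteq> S"
  proof
    fix i assume "i \<in> vec_support l"
    show "i \<in> S"
    proof (rule ccontr)
      assume "i \<notin> S"
      then have "(x \<circ> r \<circ> r') n $ i = 0" for n
        using r(2)[of "r' n"] by (auto simp: vec_support_def)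
      moreover have "(\<lambda>n. (x \<circ> r \<circ> r') n $ i) \<longlonglongrightarrow> l $ i"
        using r'(2) by (rule tendsto_vec_nth)
      ultimately have "l $ i = 0"
        by (simp add: LIMSEQ_const_iff)
      with \<open>i \<in> vec_support l\<close> show False
        by (simp add: vec_support_def)
    qed
  qed
  moreover have "f l = L"
  proof -
    have "(\<lambda>n. f ((x \<circ> r \<circ> r') n)) \<longlonglongrightarrow> f l"
      using continuous_on_tendsto_compose[OF f r'(2)] by simp
    moreover have "(\<lambda>n. f ((x \<circ> r \<circ> r') n)) \<longlonglongrightarrow> L"
      using LIMSEQ_subseq_LIMSEQ[OF lim strict_mono_o[OF r(1) r'(1)]] by (simp add: o_def)
    ultimately show ?thesis
      by (rule LIMSEQ_unique)
  qed
  ultimately show ?thesis by blast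
qed

lemma eventually_support_limit_point:
  fixes x :: "nat \<Rightarrow> real^'n" and f :: "real^'n \<Rightarrow> 'a::t2_space"
  assumes "bounded (range x)" and "continuous_on UNIV f" and "(\<lambda>k. f (x k)) \<longlonglongrightarrow> L"
  shows "\<forall>\<^sub>F k in sequentially.
           \<exists>u\<in>closure (range x). vec_support u \<subseteq> vec_support (x k) \<and> f u = L"
proof -
  have "finite (range (\<lambda>k. vec_support (x k)))"
    by (rule finite_subset[of _ "Pow UNIV"]) auto
  then show ?thesis
    by (rule eventually_mono[OF eventually_frequent_value])
      (rule frequent_support_limit_point[OF assms])
qed

subsection \<open>Convergence of IWHT\<close>

lemma convex_on_gradient_ineq:
  fixes f :: "'a::real_inner \<Rightarrow> real"
  assumes grad: "(f has_derivative (\<lambda>h. g \<bullet> h)) (at x)" and cvx: "convex_on UNIV f"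
  shows "f x + g \<bullet> (u - x) \<le> f u"
proof -
  define \<phi> where "\<phi> t = f (x + t *\<^sub>R (u - x))" for t :: real
  have "convex_on UNIV \<phi>"
  proof (rule convex_onI)
    fix a t1 t2 :: real assume a: "0 < a" "a < 1"
    have "\<phi> ((1 - a) * t1 + a * t2)
            = f ((1 - a) *\<^sub>R (x + t1 *\<^sub>R (u - x)) + a *\<^sub>R (x + t2 *\<^sub>R (u - x)))"
      unfolding \<phi>_def by (simp add: algebra_simps)
    also have "\<dots> \<le> (1 - a) * \<phi> t1 + a * \<phi> t2"
      unfolding \<phi>_def using a by (intro convex_onD[OF cvx]) auto
    finally show "\<phi> ((1 - a) *\<^sub>R t1 + a *\<^sub>R t2) \<le> (1 - a) * \<phi> t1 + a * \<phi> t2"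
      by simp
  qed simp
  moreover have "(\<phi> has_field_derivative (g \<bullet> (u - x))) (at 0)"
  proof -
    have "((\<lambda>t. x + t *\<^sub>R (u - x)) has_derivative (\<lambda>t. t *\<^sub>R (u - x))) (at 0)"
      by (auto intro!: derivative_eq_intros)
    moreover have "(f has_derivative (\<lambda>h. g \<bullet> h)) (at (x + 0 *\<^sub>R (u - x)))"
      using grad by simp
    ultimately have "(\<phi> has_derivative (\<lambda>t. g \<bullet> (t *\<^sub>R (u - x)))) (at 0)"
      unfolding \<phi>_def by (rule has_derivative_compose[unfolded o_def])
    then show ?thesis
      by (simp add: has_field_derivative_def mult.commute[of _ "g \<bullet> (u - x)"])
  qed
  ultimately have "(g \<bullet> (u - x)) * (1 - 0) \<le> \<phi> 1 - \<phi> 0"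
    by (intro convex_on_imp_above_tangent) auto
  then show ?thesis
    by (simp add: \<phi>_def)
qed

locale iwht_run =
  fixes f :: "real^'n \<Rightarrow> real" and grad :: "real^'n \<Rightarrow> real^'n"
    and H D :: "real^'n^'n" and s :: nat and x :: "nat \<Rightarrow> real^'n"
  assumes grad: "\<And>z. (f has_derivative (\<lambda>h. grad z \<bullet> h)) (at z)"
    and cvx: "convex_on UNIV f"
    and H_nonneg: "\<And>i. 0 \<le> H $ i $ i"
    and upper: "\<And>u v. f v \<le> f u + grad u \<bullet> (v - u) + 1/2 * quad_norm_sq H (v - u)"
    and D_diag: "is_diag D" and D_gt_H: "pos_def (D - H)"
    and iwht: "iwht_seq s D grad x"
    and bdd: "bounded (range x)"
begin

lemma D_diag_pos: "0 < D $ i $ i"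
  using pos_def_diag_pos[OF D_gt_H, of i] H_nonneg[of i] by simp

lemma iwht_stepE:
  obtains y where "y \<in> proj_sparse s (diag_sqrt D *v x k - diag_inv_sqrt D *v grad (x k))"
    and "x (Suc k) = diag_inv_sqrt D *v y"
  using iwht by (auto simp: iwht_seq_def)

lemma iwht_in_sparse_set: "x k \<in> sparse_set s"
proof (cases k)
  case 0
  then show ?thesis
    using iwht by (simp add: iwht_seq_def)
next
  case (Suc j)
  obtain y where "y \<in> proj_sparse s (diag_sqrt D *v x j - diag_inv_sqrt D *v grad (x j))"
    and "x (Suc j) = diag_inv_sqrt D *v y"
    by (rule iwht_stepE)
  then show ?thesis
    using iwht_step_in_sparse_set[OF D_diag_pos] Suc by simp
qed

lemma f_iwht_le_quad_model:
  assumes "w \<in> sparse_set s"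
  shows "f (x (Suc k)) \<le> f (x k) + quad_model D (grad (x k)) (x k) w"
proof -
  obtain y where y: "y \<in> proj_sparse s (diag_sqrt D *v x k - diag_inv_sqrt D *v grad (x k))"
    and step: "x (Suc k) = diag_inv_sqrt D *v y"
    by (rule iwht_stepE)
  have "f (x (Suc k)) \<le> f (x k) + grad (x k) \<bullet> (x (Suc k) - x k)
                          + 1/2 * quad_norm_sq H (x (Suc k) - x k)"
    by (rule upper)
  also have "\<dots> \<le> f (x k) + quad_model D (grad (x k)) (x k) (x (Suc k))"
    using quad_norm_sq_mono[OF D_gt_H] by (simp add: quad_model_def)
  also have "\<dots> \<le> f (x k) + quad_model D (grad (x k)) (x k) w"
    using iwht_step_minimizes_quad_model[OF D_diag_pos D_diag y assms] step by simp
  finally show ?thesis .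
qed

lemma f_iwht_decseq: "decseq (\<lambda>k. f (x k))"
proof -
  have "f (x (Suc k)) \<le> f (x k)" for k
    using f_iwht_le_quad_model[OF iwht_in_sparse_set[of k], of k]
    by (simp add: quad_model_def quad_norm_sq_def)
  then show ?thesis
    by (simp add: decseq_Suc_iff)
qed

lemma f_continuous: "continuous_on UNIV f"
  using grad has_derivative_continuous continuous_at_imp_continuous_on by blast

lemma f_iwht_converges:
  obtains L where "(\<lambda>k. f (x k)) \<longlonglongrightarrow> L"
proof -
  obtain z where "\<forall>v\<in>closure (range x). f z \<le> f v"
    using continuous_attains_inf[of "closure (range x)" f] bdd
      continuous_on_subset[OF f_continuous] by auto
  then have "f z \<le> f (x k)" for k
    using closure_subset by blast
  then show ?thesis
    using decseq_convergent[OF f_iwht_decseq] that by blast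
qed

lemma iwht_descent_towards:
  assumes "vec_support u \<subseteq> vec_support (x k)"
  shows "f (x (Suc k))
           \<le> f (x k) + t * (grad (x k) \<bullet> (u - x k)) + t\<^sup>2 / 2 * quad_norm_sq D (u - x k)"
proof -
  have "x k + t *\<^sub>R (u - x k) \<in> sparse_set s"
    by (rule sparse_set_subset_support[OF _ iwht_in_sparse_set[of k]])
      (use assms in \<open>auto simp: vec_support_def\<close>)
  from f_iwht_le_quad_model[OF this, of k] show ?thesis
    by (simp add: quad_model_def quad_norm_sq_scaleR)
qed

lemma eventually_bounded_support_limit_point:
  assumes "(\<lambda>k. f (x k)) \<longlonglongrightarrow> L"
  obtains B where "\<forall>\<^sub>F k in sequentially. \<exists>u. vec_support u \<subseteq> vec_support (x k) \<and> f u = L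
                                              \<and> norm (u - x k) \<le> B"
proof -
  obtain B where B: "\<And>v. v \<in> closure (range x) \<Longrightarrow> norm v \<le> B"
    using bounded_closure[OF bdd] unfolding bounded_iff by blast
  have near: "norm (u - x k) \<le> 2 * B" if "u \<in> closure (range x)" for u k
  proof -
    have "norm (x k) \<le> B"
      using B closure_subset by blast
    then show ?thesis
      using norm_triangle_ineq4[of u "x k"] B[OF that] by linarith
  qed
  have "\<forall>\<^sub>F k in sequentially. \<exists>u. vec_support u \<subseteq> vec_support (x k) \<and> f u = L
                                  \<and> norm (u - x k) \<le> 2 * B"
    using eventually_support_limit_point[OF bdd f_continuous assms]
    by (rule eventually_mono) (use near in blast)
  then show ?thesis by (rule that)
qed

lemma iwht_sublinear_rate:
  assumes lim: "(\<lambda>k. f (x k)) \<longlonglongrightarrow> L"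
  shows "\<exists>K c. 0 < c \<and> (\<forall>k\<ge>K. f (x k) - L \<le> c / real k)"
proof -
  obtain B where near: "\<forall>\<^sub>F k in sequentially. \<exists>u. vec_support u \<subseteq> vec_support (x k)
                                              \<and> f u = L \<and> norm (u - x k) \<le> B"
    using eventually_bounded_support_limit_point[OF lim] by blast
  obtain M where M: "0 < M" "\<And>v. quad_norm_sq D v \<le> M * (norm v)\<^sup>2"
    using quad_norm_sq_le_norm[of D] by blast
  have gap_nonneg: "0 \<le> f (x k) - L" for k
    using decseq_ge[OF f_iwht_decseq lim] by simp
  define R where "R = M * B\<^sup>2 + (f (x 0) - L) + 1"
  have "0 \<le> M * B\<^sup>2"
    using M(1) by simp
  then have "0 < R" and gap_le: "f (x k) - L \<le> R" for k
    using gap_nonneg[of 0] decseqD[OF f_iwht_decseq, of 0 k] by (simp_all add: R_def)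
  have "\<forall>\<^sub>F k in sequentially.
          f (x (Suc k)) - L \<le> (f (x k) - L) - (f (x k) - L)\<^sup>2 / (2 * R)"
    using near
  proof (rule eventually_mono, elim exE conjE)
    fix k u assume u: "vec_support u \<subseteq> vec_support (x k)" "f u = L" "norm (u - x k) \<le> B"
    show "f (x (Suc k)) - L \<le> (f (x k) - L) - (f (x k) - L)\<^sup>2 / (2 * R)"
    proof (rule quadratic_descent_sublinear)
      show "f (x (Suc k)) - L \<le> f (x k) - L + t * (grad (x k) \<bullet> (u - x k))
                                + t\<^sup>2 / 2 * quad_norm_sq D (u - x k)" for t
        using iwht_descent_towards[OF u(1), of t] by simp
      show "grad (x k) \<bullet> (u - x k) \<le> - (f (x k) - L)"
        using convex_on_gradient_ineq[OF grad cvx, of "x k" u] u(2) by simp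
      have "(norm (u - x k))\<^sup>2 \<le> B\<^sup>2"
        using u(3) by (simp add: power_mono)
      then have "quad_norm_sq D (u - x k) \<le> M * B\<^sup>2"
        using M by (meson mult_left_mono less_imp_le order_trans)
      then show "quad_norm_sq D (u - x k) \<le> R"
        using gap_nonneg[of 0] by (simp add: R_def)
    qed (use gap_nonneg \<open>0 < R\<close> in auto)
  qed
  then show ?thesis
    by (rule sublinear_rate_of_recursion) (use gap_le \<open>0 < R\<close> in auto)
qed

lemma iwht_linear_rate:
  assumes lim: "(\<lambda>k. f (x k)) \<longlonglongrightarrow> L" and "restricted_strongly_convex s f grad"
  shows "\<exists>c \<rho>. 0 < c \<and> 0 < \<rho> \<and> \<rho> < 1
                 \<and> (\<forall>\<^sub>F k in sequentially. f (x k) - L \<le> c * \<rho> ^ k)"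
proof -
  obtain \<sigma> where "0 < \<sigma>" and rsc: "\<And>p q. l0norm (p - q) \<le> s \<Longrightarrow>
      f p + grad p \<bullet> (q - p) + \<sigma> / 2 * (norm (p - q))\<^sup>2 \<le> f q"
    using assms(2) unfolding restricted_strongly_convex_def by blast
  obtain M where M: "0 < M" "\<And>v. quad_norm_sq D v \<le> M * (norm v)\<^sup>2"
    using quad_norm_sq_le_norm[of D] by blast
  define t where "t = min (1/2) (\<sigma> / M)"
  have t: "0 < t" "t < 1" "t * M \<le> \<sigma>"
    using \<open>0 < \<sigma>\<close> M(1) by (auto simp: t_def min_def field_simps)
  have "\<forall>\<^sub>F k in sequentially. f (x (Suc k)) - L \<le> (1 - t) * (f (x k) - L)"
    using eventually_support_limit_point[OF bdd f_continuous lim]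
  proof (rule eventually_mono, elim bexE conjE)
    fix k u assume u: "vec_support u \<subseteq> vec_support (x k)" "f u = L"
    have "x k - u \<in> sparse_set s"
      by (rule sparse_set_subset_support[OF _ iwht_in_sparse_set[of k]])
        (use u(1) in \<open>auto simp: vec_support_def\<close>)
    then have strong: "f (x k) + grad (x k) \<bullet> (u - x k) + \<sigma> / 2 * (norm (x k - u))\<^sup>2 \<le> f u"
      by (intro rsc) (simp add: sparse_set_def)
    show "f (x (Suc k)) - L \<le> (1 - t) * (f (x k) - L)"
    proof (rule quadratic_descent_linear[where M = M and \<sigma> = \<sigma> and n = "(norm (u - x k))\<^sup>2"])
      show "f (x (Suc k)) - L \<le> f (x k) - L + t * (grad (x k) \<bullet> (u - x k))
                                + t\<^sup>2 / 2 * quad_norm_sq D (u - x k)"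
        using iwht_descent_towards[OF u(1), of t] by simp
      show "grad (x k) \<bullet> (u - x k) \<le> - (f (x k) - L) - \<sigma> / 2 * (norm (u - x k))\<^sup>2"
        using strong u(2) by (simp add: norm_minus_commute)
    qed (use M(2)[of "u - x k"] t in simp_all)
  qed
  then obtain c where "0 < c" "\<forall>\<^sub>F k in sequentially. f (x k) - L \<le> c * (1 - t) ^ k"
    using geometric_rate_of_recursion[of "\<lambda>k. f (x k) - L" "1 - t"] t by auto
  with t show ?thesis
    by (intro exI[of _ c] exI[of _ "1 - t"]) auto
qed

end

theorem corollary4p10:
  fixes f :: "real^'n \<Rightarrow> real" and grad :: "real^'n \<Rightarrow> real^'n"
    and H D :: "real^'n^'n" and s :: nat and x :: "nat \<Rightarrow> real^'n"
  assumes s_pos: "s > 0"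
    and grad: "\<And>z. (f has_derivative (\<lambda>h. grad z \<bullet> h)) (at z)"
    and grad_cont: "continuous_on UNIV grad"
    and cvx: "convex_on UNIV f"
    and H_diag: "is_diag H" and H_nonneg: "\<And>i. H $ i $ i \<ge> 0"
    and upper: "\<And>u v. f v \<le> f u + grad u \<bullet> (v - u) + 1/2 * quad_norm_sq H (v - u)"
    and D_diag: "is_diag D" and D_gt_H: "pos_def (D - H)"
    and iwht: "iwht_seq s D grad x"
    and bdd: "bounded (range x)"
  shows "\<exists>fstar. (\<lambda>k. f (x k)) \<longlonglongrightarrow> fstar
           \<and> (\<exists>K c. c > 0 \<and> (\<forall>k\<ge>K. f (x k) - fstar \<le> c / real k))
           \<and> (restricted_strongly_convex s f grad \<longrightarrow>
                (\<exists>c \<rho>. c > 0 \<and> 0 < \<rho> \<and> \<rho> < 1 \<and>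
                   (\<forall>\<^sub>F k in sequentially. f (x k) - fstar \<le> c * \<rho> ^ k)))"
proof -
  interpret iwht_run f grad H D s x
    by (rule iwht_run.intro) fact+
  obtain L where lim: "(\<lambda>k. f (x k)) \<longlonglongrightarrow> L"
    by (rule f_iwht_converges)
  show ?thesis
    using lim iwht_sublinear_rate[OF lim] iwht_linear_rate[OF lim] by blast
qed

end
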